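(* Let $1\leq k\leq n$ and let $\Lambda_1,\dots,\Lambda_d\subset\mathbb{P}^n$ be $(k-1)$-dimensional linear subspaces satisfying $\mathrm{SP}(n-k)$. Let $2\leq r\leq d-1$ be an integer such that $\Lambda_{r+1},\dots,\Lambda_d$ do not satisfy $\mathrm{SP}(n-k)$. Then $$\dim\big(\mathrm{Span}(\Lambda_1,\dots,\Lambda_r)\cap\mathrm{Span}(\Lambda_{r+1},\dots,\Lambda_d)\big)\geq k-1.$$
   Context: $(k-1)$-dimensional linear subspaces $\Lambda_1,\dots,\Lambda_e\subset\mathbb{P}^n$ (not necessarily distinct) satisfy $\mathrm{SP}(n-k)$ if for every $j\in\{1,\dots,e\}$ and every $(n-k)$-dimensional linear subspace $L\subset\mathbb{P}^n$ meeting each $\Lambda_i$ with $i\neq j$, $L$ also meets $\Lambda_j$. (In particular a single subspace, $e=1$, does not satisfy this condition, since the empty intersection condition is met by an $(n-k)$-plane disjoint from it.) *)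

theory Defs
  imports Complex_Main "HOL-Library.Function_Algebras"
begin

text \<open>Projective space P^n over the complex numbers is modelled as the space of lines in
  the complex vector space of functions 'n => complex, where 'n is a finite index type with
  CARD('n) = n + 1.  A projective linear subspace of dimension m corresponds to a linear
  subspace of vector dimension m + 1.\<close>

definition cscale :: "complex \<Rightarrow> ('n \<Rightarrow> complex) \<Rightarrow> ('n \<Rightarrow> complex)" where
  "cscale c v = (\<lambda>i. c * v i)"

interpretation cv: vector_space "cscale :: complex \<Rightarrow> ('n \<Rightarrow> complex) \<Rightarrow> _"
  by unfold_locales (auto simp: cscale_def fun_eq_iff algebra_simps)

definition proj_subspace :: "int \<Rightarrow> ('n::finite \<Rightarrow> complex) set \<Rightarrow> bool" where
  "proj_subspace m V \<longleftrightarrow> cv.subspace V \<and> int (cv.dim V) = m + 1"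

text \<open>Projective dimension of (the projectivisation of) a linear subspace; the empty
  projective set (zero subspace) has dimension -1.\<close>
definition pdim :: "('n::finite \<Rightarrow> complex) set \<Rightarrow> int" where
  "pdim V = int (cv.dim V) - 1"

definition meets :: "('n \<Rightarrow> complex) set \<Rightarrow> ('n \<Rightarrow> complex) set \<Rightarrow> bool" where
  "meets A B \<longleftrightarrow> (\<exists>v. v \<noteq> 0 \<and> v \<in> A \<and> v \<in> B)"

definition pspan :: "('i \<Rightarrow> ('n \<Rightarrow> complex) set) \<Rightarrow> 'i set \<Rightarrow> ('n \<Rightarrow> complex) set" where
  "pspan \<Lambda> I = cv.span (\<Union>i\<in>I. \<Lambda> i)"

text \<open>SP(m) for the family \<Lambda>_i, i in I (the subspaces listed with multiplicity).\<close>
definition SP :: "int \<Rightarrow> ('i \<Rightarrow> ('n::finite \<Rightarrow> complex) set) \<Rightarrow> 'i set \<Rightarrow> bool" where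
  "SP m \<Lambda> I \<longleftrightarrow> (\<forall>j\<in>I. \<forall>L. proj_subspace m L \<and> (\<forall>i\<in>I - {j}. meets L (\<Lambda> i))
                      \<longrightarrow> meets L (\<Lambda> j))"

end

theory Submission
  imports Defs
begin

text \<open>Suppose the intersection C of A = Span(\<Lambda>_1, ..., \<Lambda>_r) and B = Span(\<Lambda>_(r+1), ..., \<Lambda>_d)
  has vector dimension less than k. A complement F of C in A then meets every \<Lambda>_i with i \<le> r,
  for dimension reasons, and meets B only in 0. Take an (n-k)-plane L0 witnessing that
  \<Lambda>_(r+1), ..., \<Lambda>_d fail SP(n-k) at some index j. The span of L0 \<inter> B and F is still
  disjoint from \<Lambda>_j, so it extends to an (n-k)-plane disjoint from \<Lambda>_j that meets all
  other \<Lambda>_i, contradicting SP(n-k) for the whole family.\<close>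

context vector_space
begin

lemma span_Un_Int_trivial:
  assumes "subspace L" "subspace B" "subspace F" "X \<subseteq> B"
    and "F \<inter> B \<subseteq> {0}" "L \<inter> X \<subseteq> {0}"
  shows "span ((L \<inter> B) \<union> F) \<inter> X \<subseteq> {0}"
proof
  fix x assume x: "x \<in> span ((L \<inter> B) \<union> F) \<inter> X"
  then obtain a b where ab: "x = a + b" "a \<in> L \<inter> B" "b \<in> F"
    using assms(1-3) by (auto simp: span_Un span_eq_iff[THEN iffD2] subspace_inter)
  have "b = x - a" using ab(1) by simp
  then have "b \<in> B" using x ab(2) assms(2,4) subspace_diff by blast
  then have "x = a" using ab assms(5) by auto
  then show "x \<in> {0}" using x ab(2) assms(6) by auto
qed

end

context finite_dimensional_vector_space
begin

lemma dim_span_Un_plus_dim_Int: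
  assumes "subspace U" "subspace W"
  shows "dim (span (U \<union> W)) + dim (U \<inter> W) = dim U + dim W"
  using dim_sums_Int[OF assms] assms by (simp add: span_Un span_eq_iff[THEN iffD2])

lemma subspaces_meet_if_dim_gt:
  assumes "subspace U" "subspace W" "U \<union> W \<subseteq> Z" "dim Z < dim U + dim W"
  shows "\<exists>v. v \<noteq> 0 \<and> v \<in> U \<and> v \<in> W"
proof -
  have "dim (span (U \<union> W)) \<le> dim Z"
    using dim_subset[OF assms(3)] by simp
  then have "dim (U \<inter> W) \<noteq> 0"
    using dim_span_Un_plus_dim_Int[OF assms(1,2)] assms(4) by linarith
  then show ?thesis by auto
qed

lemma extend_avoiding_subspace_step:
  assumes "subspace X" "subspace Y" "subspace L" "L \<subseteq> Y" "L \<inter> X \<subseteq> {0}"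
    and "dim L + dim X < dim Y"
  shows "\<exists>L'. subspace L' \<and> L \<subseteq> L' \<and> L' \<subseteq> Y \<and> L' \<inter> X \<subseteq> {0} \<and> dim L' = Suc (dim L)"
proof -
  have sum_dim: "dim (span (L \<union> X)) = dim L + dim X"
    using dim_span_Un_plus_dim_Int[OF assms(3,1)] assms(5) by (simp add: dim_eq_0[THEN iffD2])
  obtain v where v: "v \<in> Y" "v \<notin> span (L \<union> X)"
    using dim_subset[of Y "span (L \<union> X)"] sum_dim assms(6) by auto
  define L' where "L' = span (insert v L)"
  have "v \<notin> span L" using v(2) span_mono[of L "L \<union> X"] by blast
  then have dim_L': "dim L' = Suc (dim L)" by (simp add: L'_def dim_insert)
  have "span (L' \<union> X) = span (insert v L \<union> X)" unfolding L'_def span_Un span_span ..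
  then have "dim (span (L' \<union> X)) = dim (insert v (L \<union> X))" by (metis dim_span Un_insert_left)
  also have "\<dots> = dim L' + dim X" using v(2) sum_dim dim_L' by (simp add: dim_insert)
  finally have "dim (L' \<inter> X) = 0"
    using dim_span_Un_plus_dim_Int[of L' X] assms(1) by (simp add: L'_def)
  moreover have "L \<subseteq> L'" by (auto simp: L'_def intro: span_base)
  moreover have "L' \<subseteq> Y" using assms(2,4) v(1) unfolding L'_def by (simp add: span_minimal)
  ultimately show ?thesis using dim_L' by (intro exI[of _ L']) (auto simp: L'_def)
qed

lemma extend_to_complement:
  assumes "subspace X" "subspace Y" "X \<subseteq> Y" "subspace L" "L \<subseteq> Y" "L \<inter> X \<subseteq> {0}"
  shows "\<exists>F. subspace F \<and> L \<subseteq> F \<and> F \<subseteq> Y \<and> F \<inter> X \<subseteq> {0} \<and> dim F + dim X = dim Y"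
  using assms(4-6)
proof (induction "dim Y - dim L" arbitrary: L rule: less_induct)
  case less
  have "dim L + dim X = dim (span (L \<union> X))"
    using dim_span_Un_plus_dim_Int[OF less.prems(1) assms(1)] less.prems(3)
    by (simp add: dim_eq_0[THEN iffD2])
  also have "\<dots> \<le> dim Y" using less.prems(2) assms(3) by (simp add: dim_subset)
  finally consider "dim L + dim X = dim Y" | "dim L + dim X < dim Y" by linarith
  then show ?case
  proof cases
    case 1
    then show ?thesis using less.prems by blast
  next
    case 2
    then obtain L' where L': "subspace L'" "L \<subseteq> L'" "L' \<subseteq> Y" "L' \<inter> X \<subseteq> {0}"
      "dim L' = Suc (dim L)"
      using extend_avoiding_subspace_step[OF assms(1,2) less.prems] by blast
    then have "dim Y - dim L' < dim Y - dim L" using 2 by linarith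
    then show ?thesis using less.hyps L' by (meson order.trans)
  qed
qed

lemma complement_meets_large_subspaces:
  assumes "subspace A" "subspace B"
  obtains F where "subspace F" "F \<subseteq> A" "F \<inter> B \<subseteq> {0}"
    "\<And>V. subspace V \<Longrightarrow> V \<subseteq> A \<Longrightarrow> dim (A \<inter> B) < dim V \<Longrightarrow>
      \<exists>v. v \<noteq> 0 \<and> v \<in> F \<and> v \<in> V"
proof -
  obtain F where F: "subspace F" "F \<subseteq> A" "F \<inter> (A \<inter> B) \<subseteq> {0}" "dim F + dim (A \<inter> B) = dim A"
    using extend_to_complement[of "A \<inter> B" A "{0}"] assms subspace_0[OF assms(1)]
    by (auto simp: subspace_inter subspace_single_0)
  show thesis
  proof (rule that[OF F(1,2)])
    show "F \<inter> B \<subseteq> {0}" using F(2,3) by blast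
    fix V assume "subspace V" "V \<subseteq> A" "dim (A \<inter> B) < dim V"
    then show "\<exists>v. v \<noteq> 0 \<and> v \<in> F \<and> v \<in> V"
      using subspaces_meet_if_dim_gt[OF F(1)] F(2,4) by simp
  qed
qed

end

definition std_basis :: "('n::finite \<Rightarrow> complex) set" where
  "std_basis = range (\<lambda>i j. if j = i then 1 else 0)"

lemma finite_std_basis: "finite (std_basis :: ('n::finite \<Rightarrow> complex) set)"
  by (simp add: std_basis_def)

lemma sum_fun_apply: "(sum f S) x = (\<Sum>v\<in>S. f v x)"
  by (induction S rule: infinite_finite_induct) auto

lemma std_basis_independent: "cv.independent (std_basis :: ('n::finite \<Rightarrow> complex) set)"
proof (rule cv.independent_if_scalars_zero)
  show "finite (std_basis :: ('n \<Rightarrow> complex) set)" by (rule finite_std_basis)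
  fix c :: "('n \<Rightarrow> complex) \<Rightarrow> complex" and v :: "'n \<Rightarrow> complex"
  assume sum: "(\<Sum>w\<in>std_basis. cscale (c w) w) = 0" and v: "v \<in> std_basis"
  then obtain i where i: "v = (\<lambda>j. if j = i then 1 else 0)" by (auto simp: std_basis_def)
  have "(\<Sum>w\<in>std_basis. cscale (c w) w) i = (\<Sum>w\<in>std_basis. if w = v then c w else 0)"
    unfolding sum_fun_apply
    by (intro sum.cong) (auto simp: cscale_def std_basis_def i fun_eq_iff split: if_splits)
  also have "\<dots> = c v" using v by (simp add: finite_std_basis)
  finally show "c v = 0" using sum by simp
qed

lemma std_basis_span: "cv.span (std_basis :: ('n::finite \<Rightarrow> complex) set) = UNIV"
proof -
  have "f = (\<Sum>i\<in>UNIV. cscale (f i) (\<lambda>j. if j = i then 1 else 0))" for f :: "'n \<Rightarrow> complex"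
    by (simp add: fun_eq_iff sum_fun_apply cscale_def if_distrib[of "\<lambda>t. f _ * t"] cong: if_cong)
  moreover have "(\<Sum>i\<in>UNIV. cscale (f i) (\<lambda>j. if j = i then 1 else 0)) \<in> cv.span std_basis"
    for f :: "'n \<Rightarrow> complex"
    by (intro cv.span_sum cv.span_scale cv.span_base) (auto simp: std_basis_def)
  ultimately show ?thesis by (metis UNIV_eq_I)
qed

interpretation cvf: finite_dimensional_vector_space
  "cscale :: complex \<Rightarrow> ('n::finite \<Rightarrow> complex) \<Rightarrow> _" std_basis
  by unfold_locales (rule finite_std_basis std_basis_independent std_basis_span)+

lemma card_std_basis: "card (std_basis :: ('n::finite \<Rightarrow> complex) set) = card (UNIV :: 'n set)"
proof -
  have "inj (\<lambda>i (j::'n). if j = i then 1 else (0::complex))"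
    by (auto simp: inj_def fun_eq_iff split: if_splits)
  then show ?thesis by (simp add: std_basis_def card_image)
qed

lemma subspace_pspan: "cv.subspace (pspan \<Lambda> I)"
  by (simp add: pspan_def)

lemma pspan_superset: "i \<in> I \<Longrightarrow> \<Lambda> i \<subseteq> pspan \<Lambda> I"
  unfolding pspan_def by (meson UN_upper cv.span_superset order.trans)

lemma proj_subspace_through_avoiding:
  fixes X S :: "('n::finite \<Rightarrow> complex) set"
  assumes "card (UNIV :: 'n set) = n + 1" "proj_subspace (int k - 1) X"
    and "cv.subspace S" "S \<inter> X \<subseteq> {0}"
  obtains L where "proj_subspace (int n - int k) L" "S \<subseteq> L" "\<not> meets L X"
proof -
  have X: "cv.subspace X" "cv.dim X = k" using assms(2) by (auto simp: proj_subspace_def)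
  obtain L where L: "cv.subspace L" "S \<subseteq> L" "L \<inter> X \<subseteq> {0}"
    "cv.dim L + cv.dim X = cv.dim (UNIV :: ('n \<Rightarrow> complex) set)"
    using cvf.extend_to_complement[OF X(1) cv.subspace_UNIV subset_UNIV assms(3) subset_UNIV assms(4)]
    by blast
  then have "proj_subspace (int n - int k) L"
    using assms(1) X(2) by (simp add: proj_subspace_def card_std_basis)
  then show thesis using that L(2,3) by (auto simp: meets_def)
qed

lemma SP_if_small_Int_pspan:
  fixes \<Lambda> :: "'i \<Rightarrow> ('n::finite \<Rightarrow> complex) set"
  assumes "card (UNIV :: 'n set) = n + 1"
    and \<Lambda>: "\<forall>i\<in>I \<union> J. proj_subspace (int k - 1) (\<Lambda> i)"
    and "SP (int n - int k) \<Lambda> (I \<union> J)"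
    and small: "pdim (pspan \<Lambda> I \<inter> pspan \<Lambda> J) < int k - 1"
  shows "SP (int n - int k) \<Lambda> J"
  unfolding SP_def
proof (intro ballI allI impI)
  let ?A = "pspan \<Lambda> I" and ?B = "pspan \<Lambda> J"
  fix j L0 assume j: "j \<in> J"
    and L0: "proj_subspace (int n - int k) L0 \<and> (\<forall>i\<in>J - {j}. meets L0 (\<Lambda> i))"
  show "meets L0 (\<Lambda> j)"
  proof (rule ccontr)
    assume "\<not> meets L0 (\<Lambda> j)"
    obtain F where F: "cv.subspace F" "F \<subseteq> ?A" "F \<inter> ?B \<subseteq> {0}"
      and meets_large: "\<And>V. cv.subspace V \<Longrightarrow> V \<subseteq> ?A \<Longrightarrow> cv.dim (?A \<inter> ?B) < cv.dim V \<Longrightarrow>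
        \<exists>v. v \<noteq> 0 \<and> v \<in> F \<and> v \<in> V"
      using cvf.complement_meets_large_subspaces[OF subspace_pspan[of \<Lambda> I] subspace_pspan[of \<Lambda> J]]
      by blast
    have F_meets: "meets F (\<Lambda> i)" if "i \<in> I" for i
      using meets_large[of "\<Lambda> i"] \<Lambda> small pspan_superset[OF that, of \<Lambda>] that
      by (auto simp: meets_def proj_subspace_def pdim_def)
    have avoid: "cv.span ((L0 \<inter> ?B) \<union> F) \<inter> \<Lambda> j \<subseteq> {0}"
      using cv.span_Un_Int_trivial[OF _ subspace_pspan F(1) pspan_superset[OF j] F(3)] L0
        \<open>\<not> meets L0 (\<Lambda> j)\<close> by (auto simp: meets_def proj_subspace_def)
    obtain L where L: "proj_subspace (int n - int k) L" "cv.span ((L0 \<inter> ?B) \<union> F) \<subseteq> L"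
      "\<not> meets L (\<Lambda> j)"
    proof (rule proj_subspace_through_avoiding[OF assms(1) _ cv.subspace_span avoid])
      show "proj_subspace (int k - 1) (\<Lambda> j)" using \<Lambda> j by blast
    qed
    have "L0 \<inter> ?B \<subseteq> L" "F \<subseteq> L"
      using L(2) cv.span_superset[of "(L0 \<inter> ?B) \<union> F"] by auto
    have "meets L (\<Lambda> i)" if "i \<in> (I \<union> J) - {j}" for i
    proof (cases "i \<in> I")
      case True
      then show ?thesis using F_meets \<open>F \<subseteq> L\<close> unfolding meets_def by blast
    next
      case False
      then have "meets L0 (\<Lambda> i)" "\<Lambda> i \<subseteq> ?B" using L0 that pspan_superset[of i J \<Lambda>] by auto
      then show ?thesis using \<open>L0 \<inter> ?B \<subseteq> L\<close> unfolding meets_def by blast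
    qed
    then have "meets L (\<Lambda> j)" using L(1) assms(3) j unfolding SP_def by blast
    then show False using L(3) by blast
  qed
qed

theorem lemma2p11:
  fixes \<Lambda> :: "nat \<Rightarrow> ('n::finite \<Rightarrow> complex) set"
    and n k d r :: nat
  assumes "n = card (UNIV :: 'n set) - 1"
    and "1 \<le> k" and "k \<le> n"
    and "\<forall>i\<in>{1..d}. proj_subspace (int k - 1) (\<Lambda> i)"
    and "SP (int n - int k) \<Lambda> {1..d}"
    and "2 \<le> r" and "r \<le> d - 1"
    and "\<not> SP (int n - int k) \<Lambda> {r+1..d}"
  shows "pdim (pspan \<Lambda> {1..r} \<inter> pspan \<Lambda> {r+1..d}) \<ge> int k - 1"
proof (rule ccontr)
  assume "\<not> ?thesis"
  then have small: "pdim (pspan \<Lambda> {1..r} \<inter> pspan \<Lambda> {r+1..d}) < int k - 1" by simp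
  have card: "card (UNIV :: 'n set) = n + 1" using assms(1) by (simp add: card_gt_0_iff)
  have split: "{1..r} \<union> {r+1..d} = {1..d}" using assms(7) by auto
  have "SP (int n - int k) \<Lambda> {r+1..d}"
    using SP_if_small_Int_pspan[OF card _ _ small] assms(4,5) unfolding split by blast
  then show False using assms(8) by blast
qed

end
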